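(* Let $\mathcal A_1,\mathcal B_1:U_1\to V_1$ be linear maps of finite-dimensional vector spaces over a field $\mathbb F$ with $\mathcal B_1$ surjective. Let $U_2=\mathcal B_1^{-1}(\operatorname{im}\mathcal A_1)$, $V_2=\operatorname{im}\mathcal A_1$, and let $\mathcal A_2,\mathcal B_2:U_2\to V_2$ be the restrictions of $\mathcal A_1,\mathcal B_1$; similarly let $V_3=\operatorname{im}\mathcal A_2$. Let $(A_1,B_1)$ and $(A_2,B_2)$ be the matrix pairs of $(\mathcal A_1,\mathcal B_1)$ and $(\mathcal A_2,\mathcal B_2)$ in arbitrary bases, and take any regularizing decomposition of $(A_1,B_1)$. Then a regularizing decomposition of $(A_2,B_2)$ is obtained from it by deleting all summands $(J_1(0),I_1)=([0],[1])$, replacing each summand $(J_k(0),I_k)$ with $k\ge2$ by $(J_{k-1}(0),I_{k-1})$, and leaving all other summands unchanged. The number of summands $(J_1(0),I_1)$ in the decomposition of $(A_1,B_1)$ equals $\dim V_1-2\dim V_2+\dim V_3$.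
   Context: $J_k(0)$ denotes the $k\times k$ nilpotent Jordan block with ones directly below the diagonal. $L_k$ and $R_k$ are the $(k-1)\times k$ matrices obtained from $I_k$ by deleting its last row, respectively its first row. Direct sums of matrix pairs are blockwise. Two matrix pairs $(A,B)$, $(A',B')$ are equivalent if $SA=A'R$, $SB=B'R$ for nonsingular $S,R$. A regularizing decomposition of a matrix pair $(A,B)$ is a direct sum $(I_r,D)\oplus(M_1,N_1)\oplus\dots\oplus(M_t,N_t)$ equivalent to $(A,B)$, in which $D$ is $r\times r$ nonsingular and each $(M_i,N_i)$ is one of $(I_k,J_k(0))$, $(J_k(0),I_k)$, $(L_k,R_k)$, $(L_k^T,R_k^T)$, $k\ge1$. *)

theory Defs
  imports Main "Jordan_Normal_Form.VS_Connect"
begin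

definition jblock :: "nat \<Rightarrow> 'a::field mat" where
  "jblock k = mat k k (\<lambda>(i,j). if i = Suc j then 1 else 0)"

definition Lmat :: "nat \<Rightarrow> 'a::field mat" where
  "Lmat k = mat (k - 1) k (\<lambda>(i,j). if i = j then 1 else 0)"

definition Rmat :: "nat \<Rightarrow> 'a::field mat" where
  "Rmat k = mat (k - 1) k (\<lambda>(i,j). if j = Suc i then 1 else 0)"

datatype summand =
    IJ nat
  | JI nat
  | LR nat
  | LRT nat

fun summand_size :: "summand \<Rightarrow> nat" where
  "summand_size (IJ k) = k"
| "summand_size (JI k) = k"
| "summand_size (LR k) = k"
| "summand_size (LRT k) = k"

fun summand_pair :: "summand \<Rightarrow> 'a::field mat \<times> 'a mat" where
  "summand_pair (IJ k) = (1\<^sub>m k, jblock k)"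
| "summand_pair (JI k) = (jblock k, 1\<^sub>m k)"
| "summand_pair (LR k) = (Lmat k, Rmat k)"
| "summand_pair (LRT k) = (transpose_mat (Lmat k), transpose_mat (Rmat k))"

definition diag_sum :: "'a::field mat \<Rightarrow> 'a mat \<Rightarrow> 'a mat" where
  "diag_sum X Y = four_block_mat X (0\<^sub>m (dim_row X) (dim_col Y)) (0\<^sub>m (dim_row Y) (dim_col X)) Y"

definition pair_sum :: "'a::field mat \<times> 'a mat \<Rightarrow> 'a mat \<times> 'a mat \<Rightarrow> 'a mat \<times> 'a mat" where
  "pair_sum p q = (diag_sum (fst p) (fst q), diag_sum (snd p) (snd q))"

definition decomp_pair :: "'a::field mat \<Rightarrow> summand list \<Rightarrow> 'a mat \<times> 'a mat" where
  "decomp_pair D ss = foldl pair_sum (1\<^sub>m (dim_row D), D) (map summand_pair ss)"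

definition pair_equiv :: "'a::field mat \<times> 'a mat \<Rightarrow> 'a mat \<times> 'a mat \<Rightarrow> bool" where
  "pair_equiv p q \<longleftrightarrow>
     (let m = dim_row (fst p); n = dim_col (fst p) in
       fst p \<in> carrier_mat m n \<and> snd p \<in> carrier_mat m n \<and>
       fst q \<in> carrier_mat m n \<and> snd q \<in> carrier_mat m n \<and>
       (\<exists>S R. S \<in> carrier_mat m m \<and> R \<in> carrier_mat n n \<and>
              invertible_mat S \<and> invertible_mat R \<and>
              S * fst p = fst q * R \<and> S * snd p = snd q * R))"

definition regularizing_decomp :: "'a::field mat \<Rightarrow> 'a mat \<Rightarrow> 'a mat \<Rightarrow> summand list \<Rightarrow> bool" where
  "regularizing_decomp A B D ss \<longleftrightarrow>
     D \<in> carrier_mat (dim_row D) (dim_row D) \<and> invertible_mat D \<and>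
     (\<forall>s \<in> set ss. summand_size s \<ge> 1) \<and>
     pair_equiv (A, B) (decomp_pair D ss)"

fun shift_summand :: "summand \<Rightarrow> summand list" where
  "shift_summand (JI k) = (if k \<le> 1 then [] else [JI (k - 1)])"
| "shift_summand s = [s]"

definition shift_decomp :: "summand list \<Rightarrow> summand list" where
  "shift_decomp ss = concat (map shift_summand ss)"

definition basis_mat :: "nat \<Rightarrow> 'a::field mat \<Rightarrow> 'a vec set \<Rightarrow> bool" where
  "basis_mat n P W \<longleftrightarrow>
     P \<in> carrier_mat n (dim_col P) \<and>
     (\<forall>y \<in> carrier_vec (dim_col P). P *\<^sub>v y = 0\<^sub>v n \<longrightarrow> y = 0\<^sub>v (dim_col P)) \<and>
     W = (\<lambda>y. P *\<^sub>v y) ` carrier_vec (dim_col P)"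

(* M is the matrix of the map x \<mapsto> A x, restricted to the space with basis (columns of) P,
   into the space with basis (columns of) Q *)
definition mat_wrt :: "'a::field mat \<Rightarrow> 'a mat \<Rightarrow> 'a mat \<Rightarrow> 'a mat \<Rightarrow> bool" where
  "mat_wrt A P Q M \<longleftrightarrow> M \<in> carrier_mat (dim_col Q) (dim_col P) \<and> Q * M = A * P"

definition subspace_dim :: "nat \<Rightarrow> 'a::field vec set \<Rightarrow> nat" where
  "subspace_dim n W = vectorspace.dim class_ring ((module_vec TYPE('a) n)\<lparr>carrier := W\<rparr>)"

end

theory Submission
  imports Defs "Jordan_Normal_Form.DL_Rank"
begin

text \<open>
  The passage from (A1, B1) to (A2, B2) -- restrict to the preimage under B1 of the image of A1,
  and take matrices in bases of the two subspaces -- is compatible with equivalence of pairs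
  (transform the bases by the equivalence) and with direct sums (images and preimages split
  blockwise), so it can be computed summand by summand on a regularizing decomposition.
  For (I_r, D), (I_k, J_k(0)) and (L_k, R_k) the first component is surjective and nothing
  changes. For (J_k(0), I_k) the image of J_k(0) and its preimage are both the vectors with
  vanishing first coordinate, and in the basis formed by the columns of R_k^T the restriction
  is (J_(k-1)(0), I_(k-1)). Summands (L_k^T, R_k^T) cannot occur because B1 is surjective.
  Counting rows, dim V1 - dim V2 and dim V2 - dim V3 are the numbers of summands (J_k(0), I_k)
  with k >= 1 and with k >= 2, whose difference is the number of summands (J_1(0), I_1).
\<close>

section \<open>Bases given by the columns of a matrix\<close>

abbreviation mat_image :: "nat \<Rightarrow> 'a::semiring_0 mat \<Rightarrow> 'a vec set" where
  "mat_image n A \<equiv> (\<lambda>x. A *\<^sub>v x) ` carrier_vec n"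

lemma mult_unit_vec_eq_col:
  assumes A: "(A :: 'a::field mat) \<in> carrier_mat m n" and j: "j < n"
  shows "A *\<^sub>v unit_vec n j = col A j"
  using col_mult2[OF A one_carrier_mat j] A j by simp

lemma mat_eq_by_mult_vec:
  assumes A: "(A :: 'a::field mat) \<in> carrier_mat m n" and B: "B \<in> carrier_mat m n"
    and eq: "\<And>x. x \<in> carrier_vec n \<Longrightarrow> A *\<^sub>v x = B *\<^sub>v x"
  shows "A = B"
  by (rule mat_col_eqI)
    (use A B eq[OF unit_vec_carrier] mult_unit_vec_eq_col[OF A] mult_unit_vec_eq_col[OF B] in auto)

lemma basis_mat_carrier: "basis_mat n P W \<Longrightarrow> P \<in> carrier_mat n (dim_col P)"
  unfolding basis_mat_def by blast

lemma basis_mat_iff: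
  assumes "P \<in> carrier_mat n k"
  shows "basis_mat n P W \<longleftrightarrow>
    (\<forall>y \<in> carrier_vec k. P *\<^sub>v y = 0\<^sub>v n \<longrightarrow> y = 0\<^sub>v k) \<and> W = mat_image k P"
  using assms unfolding basis_mat_def by auto

lemma basis_mat_one: "basis_mat n (1\<^sub>m n) (carrier_vec n)"
  unfolding basis_mat_def by auto

lemma mat_image_one: "mat_image n (1\<^sub>m n :: 'a::field mat) = carrier_vec n"
  using basis_mat_one unfolding basis_mat_iff[OF one_carrier_mat] by blast

lemma basis_mat_inj_on:
  assumes b: "basis_mat n (P :: 'a::field mat) W" and P: "P \<in> carrier_mat n k"
  shows "inj_on (\<lambda>y. P *\<^sub>v y) (carrier_vec k)"
proof (rule inj_onI)
  fix u v assume u: "u \<in> carrier_vec k" and v: "v \<in> carrier_vec k" and eq: "P *\<^sub>v u = P *\<^sub>v v"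
  have "P *\<^sub>v (u - v) = P *\<^sub>v u - P *\<^sub>v v" by (rule mult_minus_distrib_mat_vec[OF P u v])
  also have "\<dots> = 0\<^sub>v n" unfolding eq using P v by simp
  finally have diff: "u - v = 0\<^sub>v k" using b u v unfolding basis_mat_iff[OF P] by simp
  show "u = v"
  proof (rule eq_vecI)
    fix i assume i: "i < dim_vec v"
    have "(u - v) $ i = 0" using diff i v by simp
    thus "u $ i = v $ i" using i u v by simp
  qed (use u v in simp)
qed

lemma basis_mat_subspace_dim:
  assumes b: "basis_mat n (P :: 'a::field mat) W"
  shows "subspace_dim n W = dim_col P"
proof -
  define k where "k = dim_col P"
  have P: "P \<in> carrier_mat n k" using basis_mat_carrier[OF b] unfolding k_def .
  interpret vec_space "TYPE('a)" n .
  have dist: "distinct (cols P)"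
  proof (rule distinct_conv_nth[THEN iffD2], intro allI impI)
    fix i j assume i: "i < length (cols P)" and j: "j < length (cols P)" and "i \<noteq> j"
    have "P *\<^sub>v unit_vec k i \<noteq> P *\<^sub>v unit_vec k j"
      using inj_onD[OF basis_mat_inj_on[OF b P]] \<open>i \<noteq> j\<close> i j P by fastforce
    thus "cols P ! i \<noteq> cols P ! j" using i j P by (simp add: mult_unit_vec_eq_col)
  qed
  have "lin_indpt (set (cols P))"
  proof
    assume "lin_dep (set (cols P))"
    then obtain v where "v \<in> carrier_vec k" "v \<noteq> 0\<^sub>v k" "P *\<^sub>v v = 0\<^sub>v n"
      using lin_depE[OF P _ dist] by metis
    thus False using b unfolding basis_mat_iff[OF P] by blast
  qed
  hence "rank P = k" by (rule lin_indpt_full_rank[OF P dist])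
  moreover have "col_space P = W" using b P unfolding col_space_eq[OF P] basis_mat_iff[OF P] by auto
  ultimately show ?thesis unfolding rank_def subspace_dim_def col_space_def k_def by simp
qed

lemma basis_mat_same_dim:
  "basis_mat n P W \<Longrightarrow> basis_mat n (P' :: 'a::field mat) W \<Longrightarrow> dim_col P' = dim_col P"
  using basis_mat_subspace_dim by metis

lemma basis_mat_mult:
  assumes bP: "basis_mat n (P :: 'a::field mat) V" and P: "P \<in> carrier_mat n k"
    and bG: "basis_mat k G W"
  shows "basis_mat n (P * G) ((\<lambda>x. P *\<^sub>v x) ` W)"
proof -
  define l where "l = dim_col G"
  have G: "G \<in> carrier_mat k l" using basis_mat_carrier[OF bG] unfolding l_def .
  have "y = 0\<^sub>v l" if y: "y \<in> carrier_vec l" and "(P * G) *\<^sub>v y = 0\<^sub>v n" for y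
  proof -
    have "P *\<^sub>v (G *\<^sub>v y) = 0\<^sub>v n" using that P G by simp
    hence "G *\<^sub>v y = 0\<^sub>v k" using bP P G y unfolding basis_mat_iff[OF P] by simp
    thus ?thesis using bG y unfolding basis_mat_iff[OF G] by simp
  qed
  moreover have "(\<lambda>x. P *\<^sub>v x) ` W = mat_image l (P * G)"
    using bG P G unfolding basis_mat_iff[OF G] by (auto simp: image_image)
  ultimately show ?thesis unfolding basis_mat_iff[OF mult_carrier_mat[OF P G]] by blast
qed

lemma invertible_mat_inverse:
  assumes S: "(S :: 'a::field mat) \<in> carrier_mat n n" and inv: "invertible_mat S"
  obtains S' where "S' \<in> carrier_mat n n" "S * S' = 1\<^sub>m n" "S' * S = 1\<^sub>m n" "invertible_mat S'"
proof -
  from inv obtain S' where SS': "S * S' = 1\<^sub>m n" and S'S: "S' * S = 1\<^sub>m (dim_row S')"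
    using S unfolding invertible_mat_def inverts_mat_def by auto
  have S': "S' \<in> carrier_mat n n"
    using arg_cong[OF SS', of dim_col] arg_cong[OF S'S, of dim_col] S by auto
  have "invertible_mat S'"
    using S S' SS' S'S unfolding invertible_mat_def inverts_mat_def by auto
  with that S' SS' S'S show ?thesis by auto
qed

lemma basis_mat_invertible:
  assumes S: "(S :: 'a::field mat) \<in> carrier_mat n n" and inv: "invertible_mat S"
  shows "basis_mat n S (carrier_vec n)"
proof -
  obtain S' where S': "S' \<in> carrier_mat n n" and SS': "S * S' = 1\<^sub>m n" and S'S: "S' * S = 1\<^sub>m n"
    using invertible_mat_inverse[OF S inv] by blast
  have "y = 0\<^sub>v n" if y: "y \<in> carrier_vec n" and "S *\<^sub>v y = 0\<^sub>v n" for y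
  proof -
    have "y = (S' * S) *\<^sub>v y" using y by (simp add: S'S)
    also have "\<dots> = S' *\<^sub>v 0\<^sub>v n" using that S S' by simp
    finally show ?thesis using S' by auto
  qed
  moreover have "x \<in> mat_image n S" if x: "x \<in> carrier_vec n" for x
  proof
    show "x = S *\<^sub>v (S' *\<^sub>v x)" using x S S' by (simp flip: assoc_mult_mat_vec add: SS')
  qed (use x S' in simp)
  ultimately have "(\<forall>y \<in> carrier_vec n. S *\<^sub>v y = 0\<^sub>v n \<longrightarrow> y = 0\<^sub>v n) \<and> carrier_vec n = mat_image n S"
    using S by auto
  thus ?thesis unfolding basis_mat_iff[OF S] by blast
qed

lemma basis_mat_mult_cancel:
  assumes b: "basis_mat n (P :: 'a::field mat) W" and P: "P \<in> carrier_mat n k"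
    and Z1: "Z1 \<in> carrier_mat k c" and Z2: "Z2 \<in> carrier_mat k c" and eq: "P * Z1 = P * Z2"
  shows "Z1 = Z2"
proof (rule mat_col_eqI)
  fix j assume "j < dim_col Z2"
  hence j: "j < c" using Z2 by simp
  have "P *\<^sub>v col Z1 j = P *\<^sub>v col Z2 j"
    using col_mult2[OF P Z1 j] col_mult2[OF P Z2 j] eq by simp
  thus "col Z1 j = col Z2 j" using inj_onD[OF basis_mat_inj_on[OF b P]] Z1 Z2 j by simp
qed (use Z1 Z2 in auto)

lemma basis_mat_factor:
  assumes b: "basis_mat n (P :: 'a::field mat) W" and P: "P \<in> carrier_mat n k"
    and Q: "Q \<in> carrier_mat n c" and cols: "\<And>j. j < c \<Longrightarrow> col Q j \<in> W"
  obtains T where "T \<in> carrier_mat k c" "Q = P * T"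
proof -
  have "\<forall>j. \<exists>y. j < c \<longrightarrow> y \<in> carrier_vec k \<and> col Q j = P *\<^sub>v y"
    using cols b unfolding basis_mat_iff[OF P] by blast
  then obtain f where f: "\<And>j. j < c \<Longrightarrow> f j \<in> carrier_vec k \<and> col Q j = P *\<^sub>v f j" by metis
  define T where "T = mat k c (\<lambda>(i, j). f j $ i)"
  have T: "T \<in> carrier_mat k c" unfolding T_def by simp
  have "col T j = f j" if "j < c" for j
    unfolding T_def using f[OF that] that by (intro eq_vecI) auto
  hence "Q = P * T" using P Q T f by (intro mat_col_eqI) auto
  with that T show ?thesis by blast
qed

lemma basis_mat_change:
  assumes b: "basis_mat n (P :: 'a::field mat) W" and b': "basis_mat n P' W"
    and P: "P \<in> carrier_mat n k"
  obtains T where "T \<in> carrier_mat k k" "invertible_mat T" "P = P' * T"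
proof -
  have "dim_col P' = k" using basis_mat_same_dim[OF b b'] P by simp
  hence P': "P' \<in> carrier_mat n k" using basis_mat_carrier[OF b'] by metis
  have cols_in: "col X j \<in> W" if bX: "basis_mat n X W" and X: "X \<in> carrier_mat n k" and "j < k"
    for X j
  proof -
    have "X *\<^sub>v unit_vec k j \<in> mat_image k X" by (rule imageI) simp
    thus ?thesis using bX mult_unit_vec_eq_col[OF X \<open>j < k\<close>] unfolding basis_mat_iff[OF X] by simp
  qed
  obtain T where T: "T \<in> carrier_mat k k" and PT: "P = P' * T"
    using basis_mat_factor[OF b' P' P cols_in[OF b P]] .
  obtain T' where T': "T' \<in> carrier_mat k k" and PT': "P' = P * T'"
    using basis_mat_factor[OF b P P' cols_in[OF b' P']] .
  have "P * (T' * T) = (P * T') * T" using P T T' by simp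
  also have "\<dots> = P * 1\<^sub>m k" using P by (simp flip: PT' PT)
  finally have "P * (T' * T) = P * 1\<^sub>m k" .
  from basis_mat_mult_cancel[OF b P _ _ this, where c = k] have "T' * T = 1\<^sub>m k" using T T' by simp
  moreover from this have "T * T' = 1\<^sub>m k" by (rule mat_mult_left_right_inverse[OF T' T])
  ultimately have "invertible_mat T"
    using T T' unfolding invertible_mat_def inverts_mat_def by auto
  with that T PT show ?thesis by blast
qed

section \<open>Change of basis and equivalence of matrix pairs\<close>

lemma mat_wrt_change_basis:
  assumes M: "mat_wrt (A :: 'a::field mat) P Q M" and M': "mat_wrt A P' Q' M'"
    and A: "A \<in> carrier_mat m n" and P': "P' \<in> carrier_mat n k" and Q': "Q' \<in> carrier_mat m l"
    and T: "T \<in> carrier_mat k k" and W: "W \<in> carrier_mat l l"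
    and PT: "P = P' * T" and QW: "Q = Q' * W" and bQ': "basis_mat m Q' V"
  shows "W * M = M' * T"
proof (rule basis_mat_mult_cancel[OF bQ' Q'])
  have Mc: "M \<in> carrier_mat l k" and M'c: "M' \<in> carrier_mat l k"
    using M M' P' Q' T W unfolding mat_wrt_def PT QW by auto
  thus "W * M \<in> carrier_mat l k" "M' * T \<in> carrier_mat l k" using W T by auto
  have "Q' * (W * M) = A * P"
    using M Q' W Mc unfolding mat_wrt_def QW by (simp flip: assoc_mult_mat)
  also have "\<dots> = Q' * (M' * T)"
    using M' A P' Q' T M'c unfolding mat_wrt_def PT by (simp flip: assoc_mult_mat)
  finally show "Q' * (W * M) = Q' * (M' * T)" .
qed

lemma mat_wrt_pair_equiv:
  assumes bP: "basis_mat n (P :: 'a::field mat) U" and bP': "basis_mat n P' U"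
    and bQ: "basis_mat m Q V" and bQ': "basis_mat m Q' V"
    and A: "A \<in> carrier_mat m n" and B: "B \<in> carrier_mat m n"
    and MA: "mat_wrt A P Q M" and NB: "mat_wrt B P Q N"
    and MA': "mat_wrt A P' Q' M'" and NB': "mat_wrt B P' Q' N'"
  shows "pair_equiv (M, N) (M', N')"
proof -
  define k l where "k = dim_col P" and "l = dim_col Q"
  have P: "P \<in> carrier_mat n k" unfolding k_def by (rule basis_mat_carrier[OF bP])
  have Q: "Q \<in> carrier_mat m l" unfolding l_def by (rule basis_mat_carrier[OF bQ])
  have P': "P' \<in> carrier_mat n k" and Q': "Q' \<in> carrier_mat m l"
    using basis_mat_carrier[OF bP'] basis_mat_carrier[OF bQ'] basis_mat_same_dim[OF bP bP']
      basis_mat_same_dim[OF bQ bQ'] unfolding k_def l_def by metis+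
  obtain T where T: "T \<in> carrier_mat k k" "invertible_mat T" and PT: "P = P' * T"
    using basis_mat_change[OF bP bP' P] .
  obtain W where W: "W \<in> carrier_mat l l" "invertible_mat W" and QW: "Q = Q' * W"
    using basis_mat_change[OF bQ bQ' Q] .
  have "M \<in> carrier_mat l k" "N \<in> carrier_mat l k" "M' \<in> carrier_mat l k" "N' \<in> carrier_mat l k"
    using MA NB MA' NB' P P' Q Q' unfolding mat_wrt_def by auto
  moreover have "W * M = M' * T" "W * N = N' * T"
    using mat_wrt_change_basis[OF MA MA' A P' Q' T(1) W(1) PT QW bQ']
      mat_wrt_change_basis[OF NB NB' B P' Q' T(1) W(1) PT QW bQ'] by auto
  ultimately show ?thesis unfolding pair_equiv_def Let_def using T W by auto
qed

lemma mult_inverse_swap: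
  assumes S: "(S :: 'a::field mat) \<in> carrier_mat m m" and S': "S' \<in> carrier_mat m m"
    and R: "R \<in> carrier_mat n n" and R': "R' \<in> carrier_mat n n"
    and A: "A \<in> carrier_mat m n" and C: "C \<in> carrier_mat m n"
    and S'S: "S' * S = 1\<^sub>m m" and RR': "R * R' = 1\<^sub>m n" and eq: "S * A = C * R"
  shows "S' * C = A * R'"
proof -
  have "S' * C = S' * (C * (R * R'))" using C by (simp add: RR')
  also have "\<dots> = S' * (S * A) * R'"
    unfolding eq using assoc_mult_mat[OF S' mult_carrier_mat[OF C R] R'] C R R' by simp
  also have "\<dots> = (S' * S) * A * R'" using S S' A by simp
  also have "\<dots> = A * R'" using A by (simp add: S'S)
  finally show ?thesis .
qed

lemma pair_equiv_sym:
  assumes "pair_equiv p (q :: 'a::field mat \<times> 'a mat)"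
  shows "pair_equiv q p"
proof -
  obtain m n S R where car: "fst p \<in> carrier_mat m n" "snd p \<in> carrier_mat m n"
      "fst q \<in> carrier_mat m n" "snd q \<in> carrier_mat m n"
    and S: "S \<in> carrier_mat m m" "invertible_mat S" and R: "R \<in> carrier_mat n n" "invertible_mat R"
    and eqs: "S * fst p = fst q * R" "S * snd p = snd q * R"
    using assms unfolding pair_equiv_def Let_def by blast
  obtain S' where S': "S' \<in> carrier_mat m m" "S' * S = 1\<^sub>m m" "invertible_mat S'"
    using invertible_mat_inverse[OF S] by metis
  obtain R' where R': "R' \<in> carrier_mat n n" "R * R' = 1\<^sub>m n" "invertible_mat R'"
    using invertible_mat_inverse[OF R] by metis
  have "S' * fst q = fst p * R'" "S' * snd q = snd p * R'"
    using mult_inverse_swap[OF S(1) S'(1) R(1) R'(1) _ _ S'(2) R'(2)] car eqs by auto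
  thus ?thesis unfolding pair_equiv_def Let_def using car S' R' by auto
qed

lemma mat_wrt_equiv:
  assumes w: "mat_wrt (A :: 'a::field mat) E F M" and A: "A \<in> carrier_mat m n"
    and C: "C \<in> carrier_mat m n" and E: "E \<in> carrier_mat n k" and F: "F \<in> carrier_mat m l"
    and S: "S \<in> carrier_mat m m" and R: "R \<in> carrier_mat n n" and eq: "S * A = C * R"
  shows "mat_wrt C (R * E) (S * F) M"
proof -
  have M: "M \<in> carrier_mat l k" using w E F unfolding mat_wrt_def by simp
  have "(S * F) * M = S * (A * E)" using w S F M unfolding mat_wrt_def by simp
  also have "\<dots> = (C * R) * E" using S A E by (simp flip: eq)
  also have "\<dots> = C * (R * E)" using C R E by simp
  finally show ?thesis using M S F R E unfolding mat_wrt_def by simp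
qed

lemma mat_image_equiv:
  assumes A: "(A :: 'a::field mat) \<in> carrier_mat m n" and C: "C \<in> carrier_mat m n"
    and S: "S \<in> carrier_mat m m" and R: "R \<in> carrier_mat n n" "invertible_mat R"
    and SA: "S * A = C * R"
  shows "mat_image n C = (\<lambda>y. S *\<^sub>v y) ` mat_image n A"
proof -
  have R_onto: "carrier_vec n = mat_image n R"
    using basis_mat_invertible[OF R] unfolding basis_mat_iff[OF R(1)] by blast
  have "mat_image n C = (\<lambda>x. C *\<^sub>v (R *\<^sub>v x)) ` carrier_vec n"
    by (subst (1) R_onto) (simp add: image_image)
  also have "\<dots> = (\<lambda>x. S *\<^sub>v (A *\<^sub>v x)) ` carrier_vec n"
    using A C S R by (intro image_cong) (simp_all flip: assoc_mult_mat_vec add: SA)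
  finally show ?thesis by (simp add: image_image)
qed

lemma preimage_mat_image_equiv:
  assumes A: "(A :: 'a::field mat) \<in> carrier_mat m n" and B: "B \<in> carrier_mat m n"
    and C: "C \<in> carrier_mat m n" and D: "D \<in> carrier_mat m n"
    and S: "S \<in> carrier_mat m m" "invertible_mat S" and R: "R \<in> carrier_mat n n" "invertible_mat R"
    and SA: "S * A = C * R" and SB: "S * B = D * R"
  shows "{y \<in> carrier_vec n. D *\<^sub>v y \<in> mat_image n C}
    = (\<lambda>x. R *\<^sub>v x) ` {x \<in> carrier_vec n. B *\<^sub>v x \<in> mat_image n A}"
proof -
  have R_onto: "carrier_vec n = mat_image n R"
    using basis_mat_invertible[OF R] unfolding basis_mat_iff[OF R(1)] by blast
  have key: "D *\<^sub>v (R *\<^sub>v x) \<in> mat_image n C \<longleftrightarrow> B *\<^sub>v x \<in> mat_image n A" if x: "x \<in> carrier_vec n" for x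
  proof -
    have "D *\<^sub>v (R *\<^sub>v x) = S *\<^sub>v (B *\<^sub>v x)" using x B D S R by (simp flip: assoc_mult_mat_vec add: SB)
    moreover have "B *\<^sub>v x \<in> carrier_vec m" "mat_image n A \<subseteq> carrier_vec m" using A B x by auto
    ultimately show ?thesis
      unfolding mat_image_equiv[OF A C S(1) R SA]
      using inj_on_image_mem_iff[OF basis_mat_inj_on[OF basis_mat_invertible[OF S] S(1)]] by simp
  qed
  show ?thesis
  proof (intro equalityI subsetI)
    fix y assume y: "y \<in> {y \<in> carrier_vec n. D *\<^sub>v y \<in> mat_image n C}"
    then obtain x where x: "x \<in> carrier_vec n" and "y = R *\<^sub>v x" using R_onto by blast
    thus "y \<in> (\<lambda>x. R *\<^sub>v x) ` {x \<in> carrier_vec n. B *\<^sub>v x \<in> mat_image n A}"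
      using key[OF x] y by blast
  next
    fix y assume "y \<in> (\<lambda>x. R *\<^sub>v x) ` {x \<in> carrier_vec n. B *\<^sub>v x \<in> mat_image n A}"
    then obtain x where x: "x \<in> carrier_vec n" "B *\<^sub>v x \<in> mat_image n A" and "y = R *\<^sub>v x"
      by blast
    thus "y \<in> {y \<in> carrier_vec n. D *\<^sub>v y \<in> mat_image n C}" using key[OF x(1)] R by simp
  qed
qed

lemma pair_equiv_surj:
  assumes pe: "pair_equiv p (q :: 'a::field mat \<times> 'a mat)" and A: "fst p \<in> carrier_mat m n"
    and surj: "mat_image n (snd p) = carrier_vec m"
  shows "mat_image n (snd q) = carrier_vec m"
proof
  obtain S R where B: "snd p \<in> carrier_mat m n" and D: "snd q \<in> carrier_mat m n"
    and S: "S \<in> carrier_mat m m" "invertible_mat S" and R: "R \<in> carrier_mat n n"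
    and SB: "S * snd p = snd q * R"
    using pe A unfolding pair_equiv_def Let_def by auto
  show "mat_image n (snd q) \<subseteq> carrier_vec m" using D by auto
  show "carrier_vec m \<subseteq> mat_image n (snd q)"
  proof
    fix z :: "'a vec" assume "z \<in> carrier_vec m"
    then obtain y where "y \<in> carrier_vec m" and z: "z = S *\<^sub>v y"
      using basis_mat_invertible[OF S] unfolding basis_mat_iff[OF S(1)] by blast
    then obtain x where x: "x \<in> carrier_vec n" and "y = snd p *\<^sub>v x" using surj by blast
    hence "z = snd q *\<^sub>v (R *\<^sub>v x)" using z B D S R by (simp flip: assoc_mult_mat_vec add: SB)
    thus "z \<in> mat_image n (snd q)" using R x by auto
  qed
qed

section \<open>Block-diagonal sums\<close>

lemma vec_first_append [simp]: "u \<in> carrier_vec a \<Longrightarrow> vec_first (u @\<^sub>v w) a = u"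
  unfolding vec_first_def by (rule eq_vecI) auto

lemma vec_last_append [simp]:
  "u \<in> carrier_vec a \<Longrightarrow> w \<in> carrier_vec c \<Longrightarrow> vec_last (u @\<^sub>v w) c = w"
  unfolding vec_last_def by (rule eq_vecI) auto

lemma zero_vec_add: "0\<^sub>v (a + c) = 0\<^sub>v a @\<^sub>v (0\<^sub>v c :: 'a::zero vec)"
  by (rule eq_vecI) auto

lemma diag_sum_carrier [simp]:
  "X \<in> carrier_mat a b \<Longrightarrow> Y \<in> carrier_mat c d \<Longrightarrow> diag_sum X Y \<in> carrier_mat (a + c) (b + d)"
  unfolding diag_sum_def by auto

lemma diag_sum_mult_vec:
  assumes X: "(X :: 'a::field mat) \<in> carrier_mat a b" and Y: "Y \<in> carrier_mat c d"
    and x: "x \<in> carrier_vec (b + d)"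
  shows "diag_sum X Y *\<^sub>v x = (X *\<^sub>v vec_first x b) @\<^sub>v (Y *\<^sub>v vec_last x d)"
proof -
  have "diag_sum X Y *\<^sub>v x = diag_sum X Y *\<^sub>v (vec_first x b @\<^sub>v vec_last x d)" using x by simp
  also have "\<dots> = (X *\<^sub>v vec_first x b) @\<^sub>v (Y *\<^sub>v vec_last x d)"
    unfolding diag_sum_def using X Y by (subst four_block_mat_mult_vec[of _ a b _ d _ c]) auto
  finally show ?thesis .
qed

lemma diag_sum_mult:
  assumes "(X :: 'a::field mat) \<in> carrier_mat a b" "Y \<in> carrier_mat c d"
    and "X' \<in> carrier_mat b e" "Y' \<in> carrier_mat d f"
  shows "diag_sum X Y * diag_sum X' Y' = diag_sum (X * X') (Y * Y')"
  unfolding diag_sum_def using assms by (subst mult_four_block_mat[of _ a b _ d _ c _ _ e _ f]) auto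

lemma diag_sum_empty: "Z \<in> carrier_mat 0 0 \<Longrightarrow> diag_sum X Z = X"
  unfolding diag_sum_def by (intro eq_matI) auto

lemma mem_mat_image_diag_sum:
  assumes X: "(X :: 'a::field mat) \<in> carrier_mat a b" and Y: "Y \<in> carrier_mat c d"
    and z: "z \<in> carrier_vec (a + c)"
  shows "z \<in> mat_image (b + d) (diag_sum X Y) \<longleftrightarrow>
    vec_first z a \<in> mat_image b X \<and> vec_last z c \<in> mat_image d Y"
proof
  assume "z \<in> mat_image (b + d) (diag_sum X Y)"
  then obtain x where x: "x \<in> carrier_vec (b + d)" and "z = diag_sum X Y *\<^sub>v x" by blast
  hence "z = (X *\<^sub>v vec_first x b) @\<^sub>v (Y *\<^sub>v vec_last x d)" using diag_sum_mult_vec[OF X Y] by simp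
  moreover have "X *\<^sub>v vec_first x b \<in> carrier_vec a" "Y *\<^sub>v vec_last x d \<in> carrier_vec c"
    using X Y by auto
  ultimately show "vec_first z a \<in> mat_image b X \<and> vec_last z c \<in> mat_image d Y" by auto
next
  assume "vec_first z a \<in> mat_image b X \<and> vec_last z c \<in> mat_image d Y"
  then obtain u w where u: "u \<in> carrier_vec b" "vec_first z a = X *\<^sub>v u"
    and w: "w \<in> carrier_vec d" "vec_last z c = Y *\<^sub>v w" by blast
  have "z = vec_first z a @\<^sub>v vec_last z c" using z by simp
  also have "\<dots> = diag_sum X Y *\<^sub>v (u @\<^sub>v w)" using diag_sum_mult_vec[OF X Y] u w by simp
  finally show "z \<in> mat_image (b + d) (diag_sum X Y)" using u w by blast
qed

lemma mat_image_diag_sum: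
  assumes X: "(X :: 'a::field mat) \<in> carrier_mat a b" and Y: "Y \<in> carrier_mat c d"
  shows "mat_image (b + d) (diag_sum X Y) =
    {z \<in> carrier_vec (a + c). vec_first z a \<in> mat_image b X \<and> vec_last z c \<in> mat_image d Y}"
proof -
  have "mat_image (b + d) (diag_sum X Y) \<subseteq> carrier_vec (a + c)"
    using diag_sum_carrier[OF X Y] by auto
  thus ?thesis using mem_mat_image_diag_sum[OF X Y] by blast
qed

lemma mat_image_diag_sum_eq_carrier:
  assumes X: "(X :: 'a::field mat) \<in> carrier_mat a b" and Y: "Y \<in> carrier_mat c d"
    and surj: "mat_image (b + d) (diag_sum X Y) = carrier_vec (a + c)"
  shows "mat_image b X = carrier_vec a" "mat_image d Y = carrier_vec c"
proof -
  have "u @\<^sub>v w \<in> mat_image (b + d) (diag_sum X Y)" if "u \<in> carrier_vec a" "w \<in> carrier_vec c" for u w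
    using surj that by auto
  hence both: "u \<in> mat_image b X \<and> w \<in> mat_image d Y"
    if "u \<in> carrier_vec a" "w \<in> carrier_vec c" for u w
    using mem_mat_image_diag_sum[OF X Y, of "u @\<^sub>v w"] that by auto
  have "mat_image b X \<subseteq> carrier_vec a" "mat_image d Y \<subseteq> carrier_vec c" using X Y by auto
  moreover have "carrier_vec a \<subseteq> mat_image b X" "carrier_vec c \<subseteq> mat_image d Y"
    using both[OF _ zero_carrier_vec] both[OF zero_carrier_vec] by auto
  ultimately show "mat_image b X = carrier_vec a" "mat_image d Y = carrier_vec c" by auto
qed

lemma basis_mat_diag_sum:
  assumes bX: "basis_mat a (X :: 'a::field mat) W1" and bY: "basis_mat c Y W2"
  shows "basis_mat (a + c) (diag_sum X Y)
    {z \<in> carrier_vec (a + c). vec_first z a \<in> W1 \<and> vec_last z c \<in> W2}"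
proof -
  define b d where "b = dim_col X" and "d = dim_col Y"
  have X: "X \<in> carrier_mat a b" unfolding b_def by (rule basis_mat_carrier[OF bX])
  have Y: "Y \<in> carrier_mat c d" unfolding d_def by (rule basis_mat_carrier[OF bY])
  have "y = 0\<^sub>v (b + d)" if y: "y \<in> carrier_vec (b + d)" and "diag_sum X Y *\<^sub>v y = 0\<^sub>v (a + c)" for y
  proof -
    have "(X *\<^sub>v vec_first y b) @\<^sub>v (Y *\<^sub>v vec_last y d) = 0\<^sub>v a @\<^sub>v 0\<^sub>v c"
      using that diag_sum_mult_vec[OF X Y y] by (simp add: zero_vec_add)
    moreover have "X *\<^sub>v vec_first y b \<in> carrier_vec a" using X by auto
    ultimately have "X *\<^sub>v vec_first y b = 0\<^sub>v a" "Y *\<^sub>v vec_last y d = 0\<^sub>v c"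
      using append_vec_eq by auto
    hence "vec_first y b = 0\<^sub>v b" "vec_last y d = 0\<^sub>v d"
      using bX bY unfolding basis_mat_iff[OF X] basis_mat_iff[OF Y] by auto
    thus ?thesis using vec_first_last_append[OF y] by (simp add: zero_vec_add)
  qed
  moreover have "{z \<in> carrier_vec (a + c). vec_first z a \<in> W1 \<and> vec_last z c \<in> W2}
      = mat_image (b + d) (diag_sum X Y)"
    using bX bY unfolding mat_image_diag_sum[OF X Y] basis_mat_iff[OF X] basis_mat_iff[OF Y] by simp
  ultimately show ?thesis unfolding basis_mat_iff[OF diag_sum_carrier[OF X Y]] by blast
qed

lemma mat_wrt_diag_sum:
  assumes A1: "(A1 :: 'a::field mat) \<in> carrier_mat m1 n1" and A2: "A2 \<in> carrier_mat m2 n2"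
    and E1: "E1 \<in> carrier_mat n1 k1" and E2: "E2 \<in> carrier_mat n2 k2"
    and F1: "F1 \<in> carrier_mat m1 l1" and F2: "F2 \<in> carrier_mat m2 l2"
    and w1: "mat_wrt A1 E1 F1 C1" and w2: "mat_wrt A2 E2 F2 C2"
  shows "mat_wrt (diag_sum A1 A2) (diag_sum E1 E2) (diag_sum F1 F2) (diag_sum C1 C2)"
proof -
  have C1: "C1 \<in> carrier_mat l1 k1" and C2: "C2 \<in> carrier_mat l2 k2"
    using w1 w2 E1 E2 F1 F2 unfolding mat_wrt_def by auto
  show ?thesis
    using w1 w2 C1 C2 diag_sum_mult[OF F1 F2 C1 C2] diag_sum_mult[OF A1 A2 E1 E2]
      diag_sum_carrier[OF E1 E2] diag_sum_carrier[OF F1 F2]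
    unfolding mat_wrt_def by simp
qed

section \<open>The canonical blocks\<close>

lemma sum_if_Suc_eq:
  "(\<Sum>j = 0..<k. (if i = Suc j then 1 else 0) * (f j :: 'a::field)) =
    (if i = 0 \<or> k < i then 0 else f (i - 1))"
proof (cases i)
  case (Suc i')
  have "(\<Sum>j = 0..<k. (if i = Suc j then 1 else 0) * f j) = (\<Sum>j = 0..<k. if i' = j then f j else 0)"
    using Suc by (intro sum.cong) auto
  thus ?thesis using Suc by simp
qed simp

lemma sum_if_eq:
  "(\<Sum>j = 0..<(k::nat). (if i = j then 1 else 0) * (f j :: 'a::field)) = (if i < k then f i else 0)"
proof -
  have "(\<Sum>j = 0..<k. (if i = j then 1 else 0) * f j) = (\<Sum>j = 0..<k. if i = j then f j else 0)"
    by (intro sum.cong) auto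
  thus ?thesis by simp
qed

lemma jblock_mult_vec:
  assumes "x \<in> carrier_vec k"
  shows "(jblock k :: 'a::field mat) *\<^sub>v x = vec k (\<lambda>i. if i = 0 then 0 else x $ (i - 1))"
  using assms unfolding jblock_def
  by (intro eq_vecI) (auto simp: scalar_prod_def sum_if_Suc_eq)

lemma Rmat_transpose_mult_vec:
  assumes "y \<in> carrier_vec (k - 1)" and "1 \<le> k"
  shows "(Rmat k)\<^sup>T *\<^sub>v y = vec k (\<lambda>i. if i = 0 then 0 else (y $ (i - 1) :: 'a::field))"
  using assms unfolding Rmat_def
  by (intro eq_vecI) (auto simp: scalar_prod_def sum_if_Suc_eq)

lemma Lmat_mult_vec:
  assumes "x \<in> carrier_vec k"
  shows "(Lmat k :: 'a::field mat) *\<^sub>v x = vec (k - 1) (\<lambda>i. x $ i)"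
  using assms unfolding Lmat_def
  by (intro eq_vecI) (auto simp: scalar_prod_def sum_if_eq)

lemma mat_image_Lmat: "mat_image k (Lmat k :: 'a::field mat) = carrier_vec (k - 1)"
proof
  show "mat_image k (Lmat k :: 'a mat) \<subseteq> carrier_vec (k - 1)" by (auto simp: Lmat_mult_vec)
  show "carrier_vec (k - 1) \<subseteq> mat_image k (Lmat k :: 'a mat)"
  proof
    fix z :: "'a vec" assume z: "z \<in> carrier_vec (k - 1)"
    have "z = Lmat k *\<^sub>v vec k (\<lambda>i. if i < k - 1 then z $ i else 0)"
      unfolding Lmat_mult_vec[OF vec_carrier] using z by (intro eq_vecI) auto
    thus "z \<in> mat_image k (Lmat k)" by (rule image_eqI) simp
  qed
qed

lemma mat_image_jblock:
  assumes k: "1 \<le> k"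
  shows "mat_image k (jblock k :: 'a::field mat) = {z \<in> carrier_vec k. z $ 0 = 0}"
proof
  show "mat_image k (jblock k :: 'a mat) \<subseteq> {z \<in> carrier_vec k. z $ 0 = 0}"
    using k by (auto simp: jblock_mult_vec)
  show "{z \<in> carrier_vec k. z $ 0 = 0} \<subseteq> mat_image k (jblock k :: 'a mat)"
  proof
    fix z :: "'a vec" assume z: "z \<in> {z \<in> carrier_vec k. z $ 0 = 0}"
    have "z = jblock k *\<^sub>v vec k (\<lambda>i. if i + 1 < k then z $ (i + 1) else 0)"
      unfolding jblock_mult_vec[OF vec_carrier] using z by (intro eq_vecI) (auto simp: nat.split)
    thus "z \<in> mat_image k (jblock k)" by (rule image_eqI) simp
  qed
qed

lemma basis_mat_Rmat_transpose:
  assumes k: "1 \<le> k"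
  shows "basis_mat k ((Rmat k)\<^sup>T :: 'a::field mat) {z \<in> carrier_vec k. z $ 0 = 0}"
proof -
  have R: "((Rmat k)\<^sup>T :: 'a mat) \<in> carrier_mat k (k - 1)" unfolding Rmat_def by simp
  have "y = 0\<^sub>v (k - 1)" if y: "y \<in> carrier_vec (k - 1)" and "(Rmat k)\<^sup>T *\<^sub>v y = 0\<^sub>v k" for y :: "'a vec"
  proof (rule eq_vecI)
    fix i assume "i < dim_vec (0\<^sub>v (k - 1) :: 'a vec)"
    hence "i + 1 < k" by simp
    thus "y $ i = 0\<^sub>v (k - 1) $ i"
      using arg_cong[OF that(2), of "\<lambda>v. v $ (i + 1)"] by (simp add: Rmat_transpose_mult_vec[OF y k])
  qed (use y in simp)
  moreover have "{z \<in> carrier_vec k. z $ 0 = 0} = mat_image (k - 1) ((Rmat k)\<^sup>T :: 'a mat)"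
  proof
    show "mat_image (k - 1) ((Rmat k)\<^sup>T :: 'a mat) \<subseteq> {z \<in> carrier_vec k. z $ 0 = 0}"
      using k by (auto simp: Rmat_transpose_mult_vec)
    show "{z \<in> carrier_vec k. z $ 0 = 0} \<subseteq> mat_image (k - 1) ((Rmat k)\<^sup>T :: 'a mat)"
    proof
      fix z :: "'a vec" assume z: "z \<in> {z \<in> carrier_vec k. z $ 0 = 0}"
      have "z = (Rmat k)\<^sup>T *\<^sub>v vec (k - 1) (\<lambda>i. z $ (i + 1))"
        unfolding Rmat_transpose_mult_vec[OF vec_carrier k] using z by (intro eq_vecI) (auto simp: nat.split)
      thus "z \<in> mat_image (k - 1) (Rmat k)\<^sup>T" by (rule image_eqI) simp
    qed
  qed
  ultimately show ?thesis unfolding basis_mat_iff[OF R] by blast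
qed

lemma jblock_mult_Rmat_transpose:
  assumes k: "1 \<le> k"
  shows "jblock k * (Rmat k)\<^sup>T = (Rmat k)\<^sup>T * (jblock (k - 1) :: 'a::field mat)"
proof -
  have R: "((Rmat k)\<^sup>T :: 'a mat) \<in> carrier_mat k (k - 1)" unfolding Rmat_def by simp
  have J: "(jblock k :: 'a mat) \<in> carrier_mat k k" "(jblock (k - 1) :: 'a mat) \<in> carrier_mat (k - 1) (k - 1)"
    unfolding jblock_def by auto
  show ?thesis
  proof (rule mat_eq_by_mult_vec[OF mult_carrier_mat[OF J(1) R] mult_carrier_mat[OF R J(2)]])
    fix y :: "'a vec" assume y: "y \<in> carrier_vec (k - 1)"
    have "(jblock k * (Rmat k)\<^sup>T) *\<^sub>v y = jblock k *\<^sub>v ((Rmat k)\<^sup>T *\<^sub>v y)" using J R y by simp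
    also have "\<dots> = vec k (\<lambda>i. if i \<le> 1 then 0 else y $ (i - 2))"
      unfolding Rmat_transpose_mult_vec[OF y k]
      by (subst jblock_mult_vec) (auto simp: numeral_2_eq_2)
    also have "\<dots> = (Rmat k)\<^sup>T *\<^sub>v (jblock (k - 1) *\<^sub>v y)"
      unfolding jblock_mult_vec[OF y] using k
      by (subst Rmat_transpose_mult_vec) (auto simp: numeral_2_eq_2)
    also have "\<dots> = ((Rmat k)\<^sup>T * jblock (k - 1)) *\<^sub>v y" using J R y by simp
    finally show "(jblock k * (Rmat k)\<^sup>T) *\<^sub>v y = ((Rmat k)\<^sup>T * jblock (k - 1)) *\<^sub>v y" .
  qed
qed

section \<open>Restriction to the preimage of the image\<close>

(* For p = (A1, B1), q is the pair (A2, B2) of the paper, taken in the bases E of U2 and F of V2. *)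
definition restriction_wrt ::
  "nat \<Rightarrow> nat \<Rightarrow> 'a::field mat \<times> 'a mat \<Rightarrow> 'a mat \<times> 'a mat \<Rightarrow> 'a mat \<Rightarrow> 'a mat \<Rightarrow> bool" where
  "restriction_wrt m n p q E F \<longleftrightarrow>
     fst p \<in> carrier_mat m n \<and> snd p \<in> carrier_mat m n \<and>
     basis_mat n E {x \<in> carrier_vec n. snd p *\<^sub>v x \<in> mat_image n (fst p)} \<and>
     basis_mat m F (mat_image n (fst p)) \<and>
     mat_wrt (fst p) E F (fst q) \<and> mat_wrt (snd p) E F (snd q)"

lemma restriction_wrt_surj:
  assumes A: "(A :: 'a::field mat) \<in> carrier_mat m n" and B: "B \<in> carrier_mat m n"
    and surj: "mat_image n A = carrier_vec m"
  shows "restriction_wrt m n (A, B) (A, B) (1\<^sub>m n) (1\<^sub>m m)"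
proof -
  have "{x \<in> carrier_vec n. B *\<^sub>v x \<in> mat_image n A} = carrier_vec n" using B surj by auto
  moreover have "mat_wrt X (1\<^sub>m n) (1\<^sub>m m) X" if "X \<in> carrier_mat m n" for X :: "'a mat"
    using that unfolding mat_wrt_def by simp
  ultimately show ?thesis
    unfolding restriction_wrt_def fst_conv snd_conv surj using A B basis_mat_one by metis
qed

lemma restriction_wrt_JI:
  assumes k: "1 \<le> k"
  shows "restriction_wrt k k (jblock k, 1\<^sub>m k) (jblock (k - 1), 1\<^sub>m (k - 1))
    ((Rmat k)\<^sup>T) ((Rmat k)\<^sup>T :: 'a::field mat)"
  unfolding restriction_wrt_def fst_conv snd_conv
proof (intro conjI)
  have R: "((Rmat k)\<^sup>T :: 'a mat) \<in> carrier_mat k (k - 1)" unfolding Rmat_def by simp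
  have J: "(jblock k :: 'a mat) \<in> carrier_mat k k" "(jblock (k - 1) :: 'a mat) \<in> carrier_mat (k - 1) (k - 1)"
    unfolding jblock_def by auto
  show "(jblock k :: 'a mat) \<in> carrier_mat k k" "(1\<^sub>m k :: 'a mat) \<in> carrier_mat k k" using J by auto
  have "{x \<in> carrier_vec k. 1\<^sub>m k *\<^sub>v x \<in> mat_image k (jblock k :: 'a mat)} = {z \<in> carrier_vec k. z $ 0 = 0}"
    unfolding mat_image_jblock[OF k] by auto
  thus "basis_mat k (Rmat k)\<^sup>T {x \<in> carrier_vec k. 1\<^sub>m k *\<^sub>v x \<in> mat_image k (jblock k :: 'a mat)}"
    using basis_mat_Rmat_transpose[OF k] by simp
  show "basis_mat k ((Rmat k)\<^sup>T :: 'a mat) (mat_image k (jblock k))"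
    unfolding mat_image_jblock[OF k] by (rule basis_mat_Rmat_transpose[OF k])
  show "mat_wrt (jblock k) (Rmat k)\<^sup>T (Rmat k)\<^sup>T (jblock (k - 1) :: 'a mat)"
    unfolding mat_wrt_def using R J by (simp add: jblock_mult_Rmat_transpose[OF k])
  show "mat_wrt (1\<^sub>m k) (Rmat k)\<^sup>T (Rmat k)\<^sup>T (1\<^sub>m (k - 1) :: 'a mat)"
    unfolding mat_wrt_def using R by simp
qed

lemma restriction_wrt_pair_sum:
  assumes r1: "restriction_wrt m1 n1 p1 q1 E1 F1" and r2: "restriction_wrt m2 n2 p2 q2 E2 F2"
  shows "restriction_wrt (m1 + m2) (n1 + n2) (pair_sum p1 p2) (pair_sum q1 q2)
    (diag_sum E1 E2) (diag_sum F1 F2)"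
proof -
  obtain A1 B1 A2 B2 C1 D1 C2 D2 where
    pq: "p1 = (A1, B1)" "p2 = (A2, B2)" "q1 = (C1, D1)" "q2 = (C2, D2)"
    by (metis surj_pair)
  define U1 U2 where "U1 = {x \<in> carrier_vec n1. B1 *\<^sub>v x \<in> mat_image n1 A1}"
    and "U2 = {x \<in> carrier_vec n2. B2 *\<^sub>v x \<in> mat_image n2 A2}"
  have A1: "A1 \<in> carrier_mat m1 n1" and B1: "B1 \<in> carrier_mat m1 n1"
    and bE1: "basis_mat n1 E1 U1" and bF1: "basis_mat m1 F1 (mat_image n1 A1)"
    and AC1: "mat_wrt A1 E1 F1 C1" and BD1: "mat_wrt B1 E1 F1 D1"
    using r1 unfolding restriction_wrt_def pq U1_def by auto
  have A2: "A2 \<in> carrier_mat m2 n2" and B2: "B2 \<in> carrier_mat m2 n2"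
    and bE2: "basis_mat n2 E2 U2" and bF2: "basis_mat m2 F2 (mat_image n2 A2)"
    and AC2: "mat_wrt A2 E2 F2 C2" and BD2: "mat_wrt B2 E2 F2 D2"
    using r2 unfolding restriction_wrt_def pq U2_def by auto
  have "diag_sum B1 B2 *\<^sub>v x \<in> mat_image (n1 + n2) (diag_sum A1 A2) \<longleftrightarrow>
      vec_first x n1 \<in> U1 \<and> vec_last x n2 \<in> U2" if x: "x \<in> carrier_vec (n1 + n2)" for x
  proof -
    have "B1 *\<^sub>v vec_first x n1 \<in> carrier_vec m1" "B2 *\<^sub>v vec_last x n2 \<in> carrier_vec m2"
      using B1 B2 by auto
    thus ?thesis
      using mem_mat_image_diag_sum[OF A1 A2, of "diag_sum B1 B2 *\<^sub>v x"]
      unfolding diag_sum_mult_vec[OF B1 B2 x] U1_def U2_def by auto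
  qed
  hence "{x \<in> carrier_vec (n1 + n2). diag_sum B1 B2 *\<^sub>v x \<in> mat_image (n1 + n2) (diag_sum A1 A2)}
      = {x \<in> carrier_vec (n1 + n2). vec_first x n1 \<in> U1 \<and> vec_last x n2 \<in> U2}"
    by blast
  moreover note basis_mat_diag_sum[OF bE1 bE2] basis_mat_diag_sum[OF bF1 bF2] mat_image_diag_sum[OF A1 A2]
  moreover note mat_wrt_diag_sum[OF A1 A2 basis_mat_carrier[OF bE1] basis_mat_carrier[OF bE2]
      basis_mat_carrier[OF bF1] basis_mat_carrier[OF bF2] AC1 AC2]
    mat_wrt_diag_sum[OF B1 B2 basis_mat_carrier[OF bE1] basis_mat_carrier[OF bE2]
      basis_mat_carrier[OF bF1] basis_mat_carrier[OF bF2] BD1 BD2]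
  ultimately show ?thesis unfolding restriction_wrt_def pair_sum_def pq fst_conv snd_conv
    using A1 A2 B1 B2 by simp
qed

lemma restriction_wrt_transfer:
  assumes pe: "pair_equiv p (q :: 'a::field mat \<times> 'a mat)" and r: "restriction_wrt m n p p' E F"
  obtains E' F' where "restriction_wrt m n q p' E' F'"
proof -
  define A B C D where "A = fst p" and "B = snd p" and "C = fst q" and "D = snd q"
  have A: "A \<in> carrier_mat m n" and B: "B \<in> carrier_mat m n"
    and bE: "basis_mat n E {x \<in> carrier_vec n. B *\<^sub>v x \<in> mat_image n A}"
    and bF: "basis_mat m F (mat_image n A)"
    and wA: "mat_wrt A E F (fst p')" and wB: "mat_wrt B E F (snd p')"
    using r unfolding restriction_wrt_def A_def B_def by auto
  obtain S R where C: "C \<in> carrier_mat m n" and D: "D \<in> carrier_mat m n"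
    and S: "S \<in> carrier_mat m m" "invertible_mat S" and R: "R \<in> carrier_mat n n" "invertible_mat R"
    and SA: "S * A = C * R" and SB: "S * B = D * R"
    using pe A unfolding pair_equiv_def Let_def A_def B_def C_def D_def by auto
  have "basis_mat n (R * E) {y \<in> carrier_vec n. D *\<^sub>v y \<in> mat_image n C}"
    unfolding preimage_mat_image_equiv[OF A B C D S R SA SB]
    by (rule basis_mat_mult[OF basis_mat_invertible[OF R] R(1) bE])
  moreover have "basis_mat m (S * F) (mat_image n C)"
    unfolding mat_image_equiv[OF A C S(1) R SA]
    by (rule basis_mat_mult[OF basis_mat_invertible[OF S] S(1) bF])
  ultimately have "restriction_wrt m n q p' (R * E) (S * F)"
    unfolding restriction_wrt_def C_def[symmetric] D_def[symmetric]
    using C D mat_wrt_equiv[OF wA A C basis_mat_carrier[OF bE] basis_mat_carrier[OF bF] S(1) R(1) SA]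
      mat_wrt_equiv[OF wB B D basis_mat_carrier[OF bE] basis_mat_carrier[OF bF] S(1) R(1) SB]
    by blast
  thus ?thesis by (rule that)
qed

lemma restriction_wrt_pair_equiv:
  assumes r: "restriction_wrt m n p q E F"
    and P: "basis_mat n P {x \<in> carrier_vec n. snd p *\<^sub>v x \<in> mat_image n (fst p)}"
    and Q: "basis_mat m Q (mat_image n (fst p))"
    and M: "mat_wrt (fst p) P Q M" and N: "mat_wrt (snd p) P Q N"
  shows "pair_equiv (M, N) q"
proof -
  have "fst p \<in> carrier_mat m n" "snd p \<in> carrier_mat m n"
    and "basis_mat n E {x \<in> carrier_vec n. snd p *\<^sub>v x \<in> mat_image n (fst p)}"
    and "basis_mat m F (mat_image n (fst p))"
    and "mat_wrt (fst p) E F (fst q)" "mat_wrt (snd p) E F (snd q)"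
    using r unfolding restriction_wrt_def by auto
  from mat_wrt_pair_equiv[OF P this(3) Q this(4) this(1,2) M N this(5,6)] show ?thesis by simp
qed

lemma subspace_dim_restriction_wrt:
  assumes r: "restriction_wrt m n p q E F" and C: "fst q \<in> carrier_mat m' n'"
  shows "subspace_dim m (mat_image n (fst p)) = m'"
proof -
  have "basis_mat m F (mat_image n (fst p))" and "fst q \<in> carrier_mat (dim_col F) (dim_col E)"
    using r unfolding restriction_wrt_def mat_wrt_def by auto
  thus ?thesis using basis_mat_subspace_dim[of m F] C by auto
qed

lemma subspace_dim_restriction_wrt_image:
  assumes r: "restriction_wrt m n p q E F" and r': "restriction_wrt m' n' q q' E' F'"
    and C': "fst q' \<in> carrier_mat m'' n''"
  shows "subspace_dim m ((\<lambda>x. fst p *\<^sub>v x) ` {x \<in> carrier_vec n. snd p *\<^sub>v x \<in> mat_image n (fst p)}) = m''"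
proof -
  define A C U where "A = fst p" and "C = fst q" and "U = {x \<in> carrier_vec n. snd p *\<^sub>v x \<in> mat_image n A}"
  define k l where "k = dim_col E" and "l = dim_col F"
  have A: "A \<in> carrier_mat m n" and bE: "basis_mat n E U" and bF: "basis_mat m F (mat_image n A)"
    and FC: "F * C = A * E" and C: "C \<in> carrier_mat l k"
    using r unfolding restriction_wrt_def mat_wrt_def A_def C_def U_def k_def l_def by auto
  have E: "E \<in> carrier_mat n k" unfolding k_def by (rule basis_mat_carrier[OF bE])
  have F: "F \<in> carrier_mat m l" unfolding l_def by (rule basis_mat_carrier[OF bF])
  have bF': "basis_mat l F' (mat_image k C)" and C'': "fst q' \<in> carrier_mat (dim_col F') (dim_col E')"
    using r' C unfolding restriction_wrt_def mat_wrt_def C_def by auto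
  have "(\<lambda>x. A *\<^sub>v x) ` U = (\<lambda>y. A *\<^sub>v (E *\<^sub>v y)) ` carrier_vec k"
    using bE unfolding basis_mat_iff[OF E] by (simp add: image_image)
  also have "\<dots> = (\<lambda>z. F *\<^sub>v z) ` mat_image k C"
    using A E F C by (auto simp flip: assoc_mult_mat_vec simp: FC image_image cong: image_cong)
  finally have "basis_mat m (F * F') ((\<lambda>x. A *\<^sub>v x) ` U)"
    using basis_mat_mult[OF bF F bF'] by simp
  from basis_mat_subspace_dim[OF this] show ?thesis using F C' C'' unfolding A_def U_def by auto
qed

section \<open>Regularizing decompositions\<close>

fun summand_rows :: "summand \<Rightarrow> nat" where
  "summand_rows (LR k) = k - 1"
| "summand_rows s = summand_size s"

fun summand_cols :: "summand \<Rightarrow> nat" where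
  "summand_cols (LRT k) = k - 1"
| "summand_cols s = summand_size s"

abbreviation decomp_rows :: "summand list \<Rightarrow> nat" where
  "decomp_rows ss \<equiv> sum_list (map summand_rows ss)"

abbreviation decomp_cols :: "summand list \<Rightarrow> nat" where
  "decomp_cols ss \<equiv> sum_list (map summand_cols ss)"

fun lower_summand :: "summand \<Rightarrow> summand" where
  "lower_summand (JI k) = JI (k - 1)"
| "lower_summand s = s"

lemma summand_pair_carrier:
  "fst (summand_pair s :: 'a::field mat \<times> 'a mat) \<in> carrier_mat (summand_rows s) (summand_cols s)"
  "snd (summand_pair s :: 'a mat \<times> 'a mat) \<in> carrier_mat (summand_rows s) (summand_cols s)"
  by (cases s; simp add: jblock_def Lmat_def Rmat_def)+

lemma decomp_pair_snoc: "decomp_pair D (ss @ [s]) = pair_sum (decomp_pair D ss) (summand_pair s)"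
  unfolding decomp_pair_def by simp

lemma decomp_pair_carrier:
  assumes D: "(D :: 'a::field mat) \<in> carrier_mat r r"
  shows "fst (decomp_pair D ss) \<in> carrier_mat (r + decomp_rows ss) (r + decomp_cols ss)"
    and "snd (decomp_pair D ss) \<in> carrier_mat (r + decomp_rows ss) (r + decomp_cols ss)"
proof (induction ss rule: rev_induct)
  case Nil
  { case 1 show ?case using D by (simp add: decomp_pair_def) }
  { case 2 show ?case using D by (simp add: decomp_pair_def) }
next
  case (snoc s ss)
  { case 1 show ?case
      using diag_sum_carrier[OF snoc.IH(1) summand_pair_carrier(1)]
      by (simp add: decomp_pair_snoc pair_sum_def add.assoc) }
  { case 2 show ?case
      using diag_sum_carrier[OF snoc.IH(2) summand_pair_carrier(2)]
      by (simp add: decomp_pair_snoc pair_sum_def add.assoc) }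
qed

(* For s = JI 1 the lowered summand JI 0 is a pair of 0 x 0 matrices, which pair_sum absorbs. *)
lemma decomp_pair_shift_snoc:
  assumes "1 \<le> summand_size s"
  shows "decomp_pair (D :: 'a::field mat) (shift_decomp (ss @ [s])) =
    pair_sum (decomp_pair D (shift_decomp ss)) (summand_pair (lower_summand s))"
proof (cases "s = JI 1")
  case True
  have "(jblock 0 :: 'a mat) \<in> carrier_mat 0 0" "(1\<^sub>m 0 :: 'a mat) \<in> carrier_mat 0 0"
    unfolding jblock_def by auto
  thus ?thesis using True
    by (simp add: shift_decomp_def pair_sum_def diag_sum_empty)
next
  case False
  hence "shift_summand s = [lower_summand s]" using assms by (cases s) auto
  thus ?thesis by (simp add: shift_decomp_def decomp_pair_snoc)
qed

lemma mem_shift_decomp: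
  assumes "t \<in> set (shift_decomp ss)"
  shows "t \<in> set ss \<or> (\<exists>k. 2 \<le> k \<and> JI k \<in> set ss \<and> t = JI (k - 1))"
proof -
  obtain s where s: "s \<in> set ss" and t: "t \<in> set (shift_summand s)"
    using assms unfolding shift_decomp_def by auto
  show ?thesis
  proof (cases s)
    case (JI k)
    show ?thesis
    proof (cases "k \<le> 1")
      case False
      thus ?thesis using s t JI by (intro disjI2 exI[of _ k]) auto
    qed (use s t JI in simp)
  qed (use s t in auto)
qed

lemma count_JI_one:
  "int (count_list ss (JI 1)) = int (decomp_rows ss) - 2 * int (decomp_rows (shift_decomp ss))
     + int (decomp_rows (shift_decomp (shift_decomp ss)))"
proof (induction ss)
  case (Cons s ss)
  have "int (count_list [s] (JI 1)) = int (decomp_rows [s]) - 2 * int (decomp_rows (shift_decomp [s]))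
      + int (decomp_rows (shift_decomp (shift_decomp [s])))"
  proof (cases s)
    case (JI k)
    thus ?thesis by (cases "k \<le> 1"; cases "k = 2") (auto simp: shift_decomp_def)
  qed (auto simp: shift_decomp_def)
  with Cons.IH show ?case by (cases "s = JI 1") (simp_all add: shift_decomp_def)
qed (simp add: shift_decomp_def)

lemma restriction_wrt_summand:
  assumes "1 \<le> summand_size s" and "\<And>k. s \<noteq> LRT k"
  shows "\<exists>E F. restriction_wrt (summand_rows s) (summand_cols s)
    (summand_pair s) (summand_pair (lower_summand s) :: 'a::field mat \<times> 'a mat) E F"
proof (cases s)
  case (IJ k)
  have "(jblock k :: 'a mat) \<in> carrier_mat k k" unfolding jblock_def by simp
  hence "restriction_wrt k k (1\<^sub>m k, jblock k) (1\<^sub>m k, jblock k) (1\<^sub>m k) (1\<^sub>m k :: 'a mat)"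
    by (rule restriction_wrt_surj[OF one_carrier_mat _ mat_image_one])
  thus ?thesis using IJ by auto
next
  case (JI k)
  thus ?thesis using assms(1) restriction_wrt_JI[of k] by auto
next
  case (LR k)
  have "(Lmat k :: 'a mat) \<in> carrier_mat (k - 1) k" "(Rmat k :: 'a mat) \<in> carrier_mat (k - 1) k"
    unfolding Lmat_def Rmat_def by auto
  hence "restriction_wrt (k - 1) k (Lmat k, Rmat k) (Lmat k, Rmat k) (1\<^sub>m k) (1\<^sub>m (k - 1) :: 'a mat)"
    using restriction_wrt_surj[OF _ _ mat_image_Lmat] by blast
  thus ?thesis using LR by auto
qed (use assms(2) in blast)

lemma restriction_wrt_decomp:
  assumes D: "(D :: 'a::field mat) \<in> carrier_mat r r"
    and sizes: "\<forall>s \<in> set ss. 1 \<le> summand_size s" and no_LRT: "\<forall>k. LRT k \<notin> set ss"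
  shows "\<exists>E F. restriction_wrt (r + decomp_rows ss) (r + decomp_cols ss)
    (decomp_pair D ss) (decomp_pair D (shift_decomp ss)) E F"
  using sizes no_LRT
proof (induction ss rule: rev_induct)
  case Nil
  have "restriction_wrt r r (1\<^sub>m r, D) (1\<^sub>m r, D) (1\<^sub>m r) (1\<^sub>m r)"
    by (rule restriction_wrt_surj[OF one_carrier_mat D mat_image_one])
  thus ?case using D by (auto simp: decomp_pair_def shift_decomp_def)
next
  case (snoc s ss)
  then obtain E F where IH: "restriction_wrt (r + decomp_rows ss) (r + decomp_cols ss)
      (decomp_pair D ss) (decomp_pair D (shift_decomp ss)) E F"
    by auto
  obtain E' F' where "restriction_wrt (summand_rows s) (summand_cols s)
      (summand_pair s) (summand_pair (lower_summand s) :: 'a mat \<times> 'a mat) E' F'"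
    using restriction_wrt_summand[of s] snoc.prems by auto
  from restriction_wrt_pair_sum[OF IH this] show ?case
    using snoc.prems by (auto simp: decomp_pair_snoc decomp_pair_shift_snoc add.assoc)
qed

lemma LRT_notin_surj_decomp:
  assumes D: "(D :: 'a::field mat) \<in> carrier_mat r r"
    and sizes: "\<forall>s \<in> set ss. 1 \<le> summand_size s"
    and surj: "mat_image (r + decomp_cols ss) (snd (decomp_pair D ss)) = carrier_vec (r + decomp_rows ss)"
  shows "LRT k \<notin> set ss"
  using sizes surj
proof (induction ss rule: rev_induct)
  case (snoc t ss)
  have "mat_image (r + decomp_cols ss + summand_cols t)
      (diag_sum (snd (decomp_pair D ss)) (snd (summand_pair t))) = carrier_vec (r + decomp_rows ss + summand_rows t)"
    using snoc.prems(2) by (simp add: decomp_pair_snoc pair_sum_def add.assoc)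
  from mat_image_diag_sum_eq_carrier[OF decomp_pair_carrier(2)[OF D] summand_pair_carrier(2) this]
  have surj_ss: "mat_image (r + decomp_cols ss) (snd (decomp_pair D ss)) = carrier_vec (r + decomp_rows ss)"
    and surj_t: "mat_image (summand_cols t) (snd (summand_pair t :: 'a mat \<times> 'a mat)) = carrier_vec (summand_rows t)"
    by blast+
  have "t \<noteq> LRT k"
  proof
    assume t: "t = LRT k"
    hence k: "1 \<le> k" using snoc.prems(1) by auto
    have R: "((Rmat k)\<^sup>T :: 'a mat) \<in> carrier_mat k (k - 1)" unfolding Rmat_def by simp
    have "{z \<in> carrier_vec k. z $ 0 = 0} = mat_image (k - 1) ((Rmat k)\<^sup>T :: 'a mat)"
      using basis_mat_Rmat_transpose[OF k, where 'a = 'a] unfolding basis_mat_iff[OF R] by blast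
    also have "\<dots> = carrier_vec k" using surj_t t by simp
    finally have "(unit_vec k 0 :: 'a vec) $ 0 = 0" using unit_vec_carrier by blast
    thus False using k by simp
  qed
  thus ?case using snoc.IH[OF _ surj_ss] snoc.prems(1) by auto
qed simp

lemma restriction_wrt_regularizing_decomp:
  assumes A: "(A :: 'a::field mat) \<in> carrier_mat m n" and B: "B \<in> carrier_mat m n"
    and surj: "mat_image n B = carrier_vec m"
    and P: "basis_mat n P (carrier_vec n)" and Q: "basis_mat m Q (carrier_vec m)"
    and M: "mat_wrt A P Q M" and N: "mat_wrt B P Q N" and dec: "regularizing_decomp M N D ss"
  obtains E F where "restriction_wrt m n (A, B) (decomp_pair D (shift_decomp ss)) E F"
    and "m = dim_row D + decomp_rows ss" and "\<forall>k. LRT k \<notin> set ss"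
proof -
  define r where "r = dim_row D"
  have D: "D \<in> carrier_mat r r" and sizes: "\<forall>s \<in> set ss. 1 \<le> summand_size s"
    and pe: "pair_equiv (M, N) (decomp_pair D ss)"
    using dec unfolding regularizing_decomp_def r_def by auto
  have pe_AB: "pair_equiv (M, N) (A, B)"
    by (rule mat_wrt_pair_equiv[OF P basis_mat_one Q basis_mat_one A B M N])
      (use A B in \<open>simp_all add: mat_wrt_def\<close>)
  have "A \<in> carrier_mat (dim_row M) (dim_col M)" using pe_AB unfolding pair_equiv_def Let_def by simp
  hence "M \<in> carrier_mat m n" using A by (metis carrier_matD carrier_matI)
  hence dims: "m = r + decomp_rows ss" "n = r + decomp_cols ss"
    using pe decomp_pair_carrier(1)[OF D, of ss] unfolding pair_equiv_def Let_def by auto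
  have "mat_image n (snd (M, N)) = carrier_vec m"
    by (rule pair_equiv_surj[OF pair_equiv_sym[OF pe_AB]]) (use A surj in simp_all)
  hence "mat_image n (snd (decomp_pair D ss)) = carrier_vec m"
    by (rule pair_equiv_surj[OF pe, rotated]) (use \<open>M \<in> carrier_mat m n\<close> in simp)
  hence no_LRT: "\<forall>k. LRT k \<notin> set ss"
    using LRT_notin_surj_decomp[OF D sizes] dims by simp
  obtain E F where "restriction_wrt m n (decomp_pair D ss) (decomp_pair D (shift_decomp ss)) E F"
    using restriction_wrt_decomp[OF D sizes no_LRT] dims by auto
  then obtain E' F' where "restriction_wrt m n (M, N) (decomp_pair D (shift_decomp ss)) E' F'"
    by (rule restriction_wrt_transfer[OF pair_equiv_sym[OF pe]])
  then obtain E'' F'' where "restriction_wrt m n (A, B) (decomp_pair D (shift_decomp ss)) E'' F''"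
    by (rule restriction_wrt_transfer[OF pe_AB])
  with that dims no_LRT show ?thesis unfolding r_def by blast
qed

theorem lemma2:
  fixes A1 B1 :: "'a::field mat" and m n :: nat
    and P1 Q1 M1 N1 P2 Q2 M2 N2 D :: "'a mat" and ss :: "summand list"
    and U2 V2 V3 :: "'a vec set"
  assumes A1: "A1 \<in> carrier_mat m n" and B1: "B1 \<in> carrier_mat m n"
    and surj_B1: "(\<lambda>x. B1 *\<^sub>v x) ` carrier_vec n = carrier_vec m"
    and V2_def: "V2 = (\<lambda>x. A1 *\<^sub>v x) ` carrier_vec n"
    and U2_def: "U2 = {x \<in> carrier_vec n. B1 *\<^sub>v x \<in> V2}"
    and V3_def: "V3 = (\<lambda>x. A1 *\<^sub>v x) ` U2"
    and P1: "basis_mat n P1 (carrier_vec n)" and Q1: "basis_mat m Q1 (carrier_vec m)"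
    and M1: "mat_wrt A1 P1 Q1 M1" and N1: "mat_wrt B1 P1 Q1 N1"
    and P2: "basis_mat n P2 U2" and Q2: "basis_mat m Q2 V2"
    and M2: "mat_wrt A1 P2 Q2 M2" and N2: "mat_wrt B1 P2 Q2 N2"
    and dec: "regularizing_decomp M1 N1 D ss"
  shows "regularizing_decomp M2 N2 D (shift_decomp ss) \<and>
         int (count_list ss (JI 1)) =
           int m - 2 * int (subspace_dim m V2) + int (subspace_dim m V3)"
proof -
  define r ss' where "r = dim_row D" and "ss' = shift_decomp ss"
  have D: "D \<in> carrier_mat r r" "invertible_mat D" and sizes: "\<forall>s \<in> set ss. 1 \<le> summand_size s"
    using dec unfolding regularizing_decomp_def r_def by auto
  obtain E F where res: "restriction_wrt m n (A1, B1) (decomp_pair D ss') E F"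
    and m: "m = r + decomp_rows ss" and no_LRT: "\<forall>k. LRT k \<notin> set ss"
    using restriction_wrt_regularizing_decomp[OF A1 B1 surj_B1 P1 Q1 M1 N1 dec]
    unfolding r_def ss'_def by metis
  have sizes': "\<forall>s \<in> set ss'. 1 \<le> summand_size s" and no_LRT': "\<forall>k. LRT k \<notin> set ss'"
    using sizes no_LRT mem_shift_decomp unfolding ss'_def by fastforce+
  have "pair_equiv (M2, N2) (decomp_pair D ss')"
    by (rule restriction_wrt_pair_equiv[OF res]) (use P2 Q2 M2 N2 in \<open>simp_all add: U2_def V2_def\<close>)
  hence part1: "regularizing_decomp M2 N2 D ss'"
    unfolding regularizing_decomp_def using D sizes' r_def by blast
  obtain E' F' where res': "restriction_wrt (r + decomp_rows ss') (r + decomp_cols ss')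
      (decomp_pair D ss') (decomp_pair D (shift_decomp ss')) E' F'"
    using restriction_wrt_decomp[OF D(1) sizes' no_LRT'] by blast
  have "subspace_dim m V2 = r + decomp_rows ss'"
    using subspace_dim_restriction_wrt[OF res decomp_pair_carrier(1)[OF D(1)]] V2_def by simp
  moreover have "subspace_dim m V3 = r + decomp_rows (shift_decomp ss')"
    using subspace_dim_restriction_wrt_image[OF res res' decomp_pair_carrier(1)[OF D(1)]]
    unfolding V3_def U2_def V2_def by simp
  ultimately show ?thesis using part1 count_JI_one[of ss] m unfolding ss'_def by simp
qed

end
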